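(* For every integer $n\ge 3$, $$\pi_n=\frac{n}{2\cos(\pi/n)}\left(\cos\Big(\tfrac{\pi}{n}\big(2\lfloor\tfrac{n+1}{4}\rfloor-1\big)\Big)-\cos\Big(\tfrac{\pi}{n}\big(2\lfloor\tfrac{n+1}{4}\rfloor+1\big)\Big)\right),$$ equivalently $$\pi_n=\begin{cases} n\tan(\pi/n) & n\equiv 0\pmod 4,\\ n\tan(\pi/n)\cos\big(\tfrac{\pi}{2n}\big) & n \text{ odd},\\ n\sin(\pi/n) & n\equiv 2\pmod 4.\end{cases}$$ In particular $\pi_3=9/2$, $\pi_4=4$, $\pi_5=\tfrac{5(5-\sqrt5)}{4}$, $\pi_6=3$, $\pi_8=8\sqrt2-8$.
   Context: For a convex set $B\subset\mathbb{R}^2$ and an interior point $x_0$, $\|x\|_{B,x_0}:=\inf\{\xi>0 : x\in \xi(B-x_0)\}$. For $n\ge3$ let $B_n$ be a regular convex $n$-gon and $c_n$ its center; $\pi_n$ denotes one half of the perimeter of $B_n$ measured with $\|\cdot\|_{B_n,c_n}$, i.e. $\pi_n=\frac12\sum_{i=1}^n\|p_i-p_{i-1}\|_{B_n,c_n}$ where $p_0,\dots,p_n=p_0$ are the vertices of $B_n$ in counterclockwise order (this is independent of the size, position and orientation of $B_n$, and equals the clockwise value). *)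

theory Defs
  imports "HOL-Analysis.Analysis"
begin

definition gauge_norm :: "complex set \<Rightarrow> complex \<Rightarrow> complex \<Rightarrow> real" where
  "gauge_norm B x0 x = Inf {\<xi>::real. \<xi> > 0 \<and> x \<in> (\<lambda>y. complex_of_real \<xi> * (y - x0)) ` B}"

text \<open>Vertices (counterclockwise) of the regular n-gon with center c,
  circumradius r and rotation angle theta; p k for k = 0..n, with p n = p 0.\<close>
definition reg_vertex :: "nat \<Rightarrow> complex \<Rightarrow> real \<Rightarrow> real \<Rightarrow> nat \<Rightarrow> complex" where
  "reg_vertex n c r \<theta> k = c + complex_of_real r * cis (\<theta> + 2 * pi * real k / real n)"

definition reg_polygon :: "nat \<Rightarrow> complex \<Rightarrow> real \<Rightarrow> real \<Rightarrow> complex set" where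
  "reg_polygon n c r \<theta> = convex hull (reg_vertex n c r \<theta> ` {0..<n})"

definition half_perimeter :: "nat \<Rightarrow> complex \<Rightarrow> real \<Rightarrow> real \<Rightarrow> real" where
  "half_perimeter n c r \<theta> = (1/2) * (\<Sum>i=1..n.
      gauge_norm (reg_polygon n c r \<theta>) c (reg_vertex n c r \<theta> i - reg_vertex n c r \<theta> (i - 1)))"

end

theory Submission
  imports Defs
begin

text \<open>Write a = pi/n. The side vector p_i - p_(i-1) of B_n points at angle pi/2 + a beyond
  p_(i-1), so with m = floor((n+1)/4) the ray from the centre in that direction leaves B_n through
  the edge [p_(i-1+m), p_(i+m)]: this is the inequality 2ma - a <= pi/2 <= 2ma + a. That edge lies
  on a supporting line at distance r cos a from the centre, so the gauge of every side is the ratio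
  of normal components (cos((2m-1)a) - cos((2m+1)a)) / cos a. Summing n equal sides gives pi_n, and
  since the difference of cosines is 2 sin(2ma) sin a, pi_n = n tan a sin(2ma); the residue of n
  mod 4 decides how far 2ma is from pi/2.\<close>

lemma cos_mult_cis_chord:
  fixes a x :: real
  shows "complex_of_real (cos a) * (cis (2 * a - x) - cis (- x))
    = complex_of_real (cos (x - a)) * cis (2 * a) - complex_of_real (cos (x + a))"
proof -
  have "cis (2 * a - x) - cis (- x) = cis (a - x) * (cis a - cis (- a))"
    by (simp add: algebra_simps cis_mult)
  also have "cis a - cis (- a) = 2 * \<i> * sin a" by (simp add: complex_eq_iff)
  finally have lhs:
    "complex_of_real (cos a) * (cis (2 * a - x) - cis (- x)) = \<i> * sin (2 * a) * cis (a - x)"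
    by (simp add: sin_double)
  have "complex_of_real (cos y) * cis (2 * a) - complex_of_real (cos (y + 2 * a))
      = \<i> * sin (2 * a) * cis (- y)" for y
    by (simp add: complex_eq_iff cos_add)
  from this[of "x - a"] have rhs: "complex_of_real (cos (x - a)) * cis (2 * a)
      - complex_of_real (cos (x + a)) = \<i> * sin (2 * a) * cis (a - x)"
    by (simp add: add.commute)
  show ?thesis unfolding lhs rhs ..
qed

lemma Re_edge_combination_mult_cnj_normal:
  "Re (cis \<beta> * (complex_of_real s + complex_of_real t * cis (2 * a)) * cnj (cis (\<beta> + a)))
    = (s + t) * cos a"
proof -
  have turn: "cis \<beta> * cnj (cis (\<beta> + a)) = cis (- a)" "cis (- a) * cis (2 * a) = cis a"
    by (simp_all add: cis_cnj cis_mult)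
  have "cis \<beta> * (complex_of_real s + complex_of_real t * cis (2 * a)) * cnj (cis (\<beta> + a))
      = (cis \<beta> * cnj (cis (\<beta> + a))) * (complex_of_real s + complex_of_real t * cis (2 * a))"
    by (simp add: mult_ac)
  also have "\<dots> = s * cis (- a) + t * (cis (- a) * cis (2 * a))"
    unfolding turn(1) by (simp add: algebra_simps)
  finally have "cis \<beta> * (complex_of_real s + complex_of_real t * cis (2 * a)) * cnj (cis (\<beta> + a))
      = s * cis (- a) + t * cis a"
    unfolding turn(2) .
  then show ?thesis by (simp add: algebra_simps)
qed

lemma cos_odd_multiple_le:
  fixes l :: int
  assumes "odd l" "0 < n"
  shows "cos (of_int l * pi / real n) \<le> cos (pi / real n)"
proof -
  have mono: "cos (of_int p * pi / real n) \<le> cos (pi / real n)" if "1 \<le> p" "p \<le> int n" for p :: int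
  proof (rule cos_monotone_0_pi_le)
    show "pi / real n \<le> of_int p * pi / real n"
      using that assms(2) by (simp add: divide_right_mono)
    show "of_int p * pi / real n \<le> pi"
      using that assms(2) by (simp add: field_simps)
  qed simp
  define q where "q = l mod (2 * int n)"
  define d where "d = l div (2 * int n)"
  have l: "l = q + 2 * int n * d" by (simp add: q_def d_def)
  have q: "0 \<le> q" "q < 2 * int n" using assms(2) by (simp_all add: q_def)
  have "q \<noteq> 0" using assms(1) l by auto
  have "of_int l * pi / real n = of_int q * pi / real n + 2 * pi * of_int d"
    using assms(2) by (subst l) (simp add: field_simps)
  then have cos_q: "cos (of_int l * pi / real n) = cos (of_int q * pi / real n)"
    by (simp add: cos_add)
  show ?thesis
  proof (cases "q \<le> int n")
    case True
    with q \<open>q \<noteq> 0\<close> show ?thesis unfolding cos_q by (intro mono) auto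
  next
    case False
    have "of_int (2 * int n - q) * pi / real n = 2 * pi - of_int q * pi / real n"
      using assms(2) by (simp add: field_simps)
    then have "cos (of_int q * pi / real n) = cos (of_int (2 * int n - q) * pi / real n)"
      by simp
    with False q show ?thesis unfolding cos_q by (simp only:) (intro mono; simp)
  qed
qed

lemma gauge_norm_eq_of_supporting_line:
  assumes B: "B \<subseteq> {y. Re ((y - c) * cnj u) \<le> h}"
    and y0: "y0 \<in> B" "Re ((y0 - c) * cnj u) = h"
    and pos: "0 < h" "0 < \<mu>"
  shows "gauge_norm B c (complex_of_real \<mu> * (y0 - c)) = \<mu>"
  unfolding gauge_norm_def
proof (rule cInf_eq_minimum)
  let ?S = "{\<xi>. 0 < \<xi> \<and> complex_of_real \<mu> * (y0 - c) \<in> (\<lambda>y. complex_of_real \<xi> * (y - c)) ` B}"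
  show "\<mu> \<in> ?S"
    using y0(1) pos(2) by blast
  fix \<xi> assume "\<xi> \<in> ?S"
  then obtain y where \<xi>: "0 < \<xi>" and "y \<in> B"
    and eq: "complex_of_real \<mu> * (y0 - c) = complex_of_real \<xi> * (y - c)" by auto
  have "\<mu> * h = Re (complex_of_real \<mu> * (y0 - c) * cnj u)" by (simp add: y0(2)[symmetric] algebra_simps)
  also have "\<dots> = \<xi> * Re ((y - c) * cnj u)" unfolding eq by (simp add: mult.assoc)
  also have "\<dots> \<le> \<xi> * h" using B \<open>y \<in> B\<close> \<xi> by (intro mult_left_mono) auto
  finally show "\<mu> \<le> \<xi>" using pos by simp
qed

lemma reg_vertex_mod:
  assumes "0 < n"
  shows "reg_vertex n c r \<theta> (k mod n) = reg_vertex n c r \<theta> k"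
proof -
  have "real k = real (k mod n) + real n * real (k div n)"
    by (metis of_nat_add of_nat_mult mod_div_mult_eq mult.commute)
  then have "\<theta> + 2 * pi * real k / real n
      = (\<theta> + 2 * pi * real (k mod n) / real n) + 2 * pi * real (k div n)"
    using assms by (simp add: field_simps)
  then show ?thesis by (simp add: reg_vertex_def flip: cis_mult)
qed

lemma reg_vertex_in_reg_polygon:
  assumes "0 < n"
  shows "reg_vertex n c r \<theta> k \<in> reg_polygon n c r \<theta>"
  unfolding reg_polygon_def
  by (rule hull_inc) (metis assms reg_vertex_mod image_eqI atLeastLessThan_iff mod_less_divisor zero_le)

lemma reg_polygon_edge_point:
  assumes "0 < n" "0 \<le> s" "0 \<le> t" "s + t = 1"
  shows "c + complex_of_real r * cis (\<theta> + 2 * pi * real k / real n)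
      * (complex_of_real s + complex_of_real t * cis (2 * pi / real n)) \<in> reg_polygon n c r \<theta>"
proof -
  have "\<theta> + 2 * pi * real (Suc k) / real n = (\<theta> + 2 * pi * real k / real n) + 2 * pi / real n"
    by (simp add: ring_distribs add_divide_distrib)
  then have "s *\<^sub>R reg_vertex n c r \<theta> k + t *\<^sub>R reg_vertex n c r \<theta> (Suc k)
      = complex_of_real (s + t) * c + complex_of_real r * cis (\<theta> + 2 * pi * real k / real n)
      * (complex_of_real s + complex_of_real t * cis (2 * pi / real n))"
    unfolding reg_vertex_def by (simp add: scaleR_conv_of_real algebra_simps flip: cis_mult)
  moreover have "s *\<^sub>R reg_vertex n c r \<theta> k + t *\<^sub>R reg_vertex n c r \<theta> (Suc k)
      \<in> reg_polygon n c r \<theta>"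
    using assms reg_vertex_in_reg_polygon[of n] unfolding reg_polygon_def
    by (intro convexD convex_convex_hull) auto
  ultimately show ?thesis using assms(4) by simp
qed

lemma reg_vertex_side_eq_rotated_chord:
  assumes "0 < n" "1 \<le> i"
  shows "reg_vertex n c r \<theta> i - reg_vertex n c r \<theta> (i - 1)
    = r * cis (\<theta> + 2 * pi * real (i - 1 + m) / real n)
      * (cis (2 * (pi / real n) - 2 * real m * (pi / real n)) - cis (- (2 * real m * (pi / real n))))"
proof -
  define \<beta> where "\<beta> = \<theta> + 2 * pi * real (i - 1 + m) / real n"
  have "\<theta> + 2 * pi * real i / real n = \<beta> + (2 * (pi / real n) - 2 * real m * (pi / real n))"
    "\<theta> + 2 * pi * real (i - 1) / real n = \<beta> + - (2 * real m * (pi / real n))"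
    using assms by (simp_all add: \<beta>_def field_simps)
  then show ?thesis
    unfolding reg_vertex_def \<beta>_def[symmetric] by (simp only: flip: cis_mult) (simp add: algebra_simps)
qed

lemma reg_polygon_subset_halfplane:
  fixes k :: nat and \<theta> :: real
  assumes "0 < n" "0 \<le> r"
  defines "u \<equiv> cis (\<theta> + (2 * real k + 1) * pi / real n)"
  shows "reg_polygon n c r \<theta> \<subseteq> {y. Re ((y - c) * cnj u) \<le> r * cos (pi / real n)}"
  unfolding reg_polygon_def
proof (rule hull_minimal)
  have "{y. Re ((y - c) * cnj u) \<le> r * cos (pi / real n)}
      = {y. inner u y \<le> r * cos (pi / real n) + inner u c}"
    by (auto simp: inner_complex_def algebra_simps)
  then show "convex {y. Re ((y - c) * cnj u) \<le> r * cos (pi / real n)}"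
    by (simp add: convex_halfspace_le)
  show "reg_vertex n c r \<theta> ` {0..<n} \<subseteq> {y. Re ((y - c) * cnj u) \<le> r * cos (pi / real n)}"
  proof clarify
    fix j
    have "\<theta> + 2 * pi * real j / real n - (\<theta> + (2 * real k + 1) * pi / real n)
        = of_int (2 * (int j - int k) - 1) * pi / real n"
      using assms(1) by (simp add: field_simps)
    moreover have "(reg_vertex n c r \<theta> j - c) * cnj u
        = r * cis (\<theta> + 2 * pi * real j / real n - (\<theta> + (2 * real k + 1) * pi / real n))"
      unfolding reg_vertex_def u_def by (simp add: cis_cnj mult.assoc cis_mult flip: diff_conv_add_uminus)
    ultimately have "(reg_vertex n c r \<theta> j - c) * cnj u
        = r * cis (of_int (2 * (int j - int k) - 1) * pi / real n)"
      by (simp only:)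
    then show "Re ((reg_vertex n c r \<theta> j - c) * cnj u) \<le> r * cos (pi / real n)"
      using cos_odd_multiple_le[of "2 * (int j - int k) - 1" n] assms by (simp add: mult_left_mono)
  qed
qed

lemma quarter_index_cos_bounds:
  fixes n :: nat
  assumes "3 \<le> n"
  defines "m \<equiv> (n + 1) div 4"
  shows "0 \<le> cos (pi / real n * (2 * real m - 1))"
    and "cos (pi / real n * (2 * real m + 1)) \<le> 0"
    and "cos (pi / real n * (2 * real m + 1)) < cos (pi / real n * (2 * real m - 1))"
proof -
  have "1 \<le> m" "4 * m \<le> n + 1" "n \<le> 4 * m + 2" using assms by auto
  then have m: "1 \<le> real m" "4 * real m \<le> real n + 1" "real n \<le> 4 * real m + 2"
    by linarith+
  have scale: "pi / real n * t \<le> pi / real n * t' \<longleftrightarrow> t \<le> t'"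
    and scale_less: "pi / real n * t < pi / real n * t' \<longleftrightarrow> t < t'" for t t'
    using assms by (simp_all only: mult_le_cancel_left_pos mult_less_cancel_left_pos
        divide_pos_pos pi_gt_zero of_nat_0_less_iff)
  have "pi / real n * 0 \<le> pi / real n * (2 * real m - 1)"
    and "pi / real n * (2 * real m - 1) < pi / real n * (2 * real m + 1)"
    and "pi / real n * (2 * real m - 1) \<le> pi / real n * (real n / 2)"
    and "pi / real n * (real n / 2) \<le> pi / real n * (2 * real m + 1)"
    and "pi / real n * (2 * real m + 1) \<le> pi / real n * real n"
    unfolding scale scale_less using m assms by linarith+
  then have lo: "0 \<le> pi / real n * (2 * real m - 1)"
    and lt: "pi / real n * (2 * real m - 1) < pi / real n * (2 * real m + 1)"
    and mid: "pi / real n * (2 * real m - 1) \<le> pi / 2" "pi / 2 \<le> pi / real n * (2 * real m + 1)"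
    and hi: "pi / real n * (2 * real m + 1) \<le> pi"
    using assms by simp_all
  show "0 \<le> cos (pi / real n * (2 * real m - 1))"
    using lo mid(1) by (intro cos_ge_zero) simp_all
  show "cos (pi / real n * (2 * real m + 1)) \<le> 0"
    using cos_monotone_0_pi_le[of "pi / 2", OF _ mid(2) hi] by simp
  show "cos (pi / real n * (2 * real m + 1)) < cos (pi / real n * (2 * real m - 1))"
    using lo lt hi by (rule cos_monotone_0_pi)
qed

lemma cis_chord_eq_scaled_convex_combination:
  fixes a x :: real
  assumes "0 < cos a" "0 \<le> cos (x - a)" "cos (x + a) \<le> 0" "cos (x + a) < cos (x - a)"
  obtains s t where "0 \<le> s" "0 \<le> t" "s + t = 1"
    and "cis (2 * a - x) - cis (- x) = complex_of_real ((cos (x - a) - cos (x + a)) / cos a)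
      * (complex_of_real s + complex_of_real t * cis (2 * a))"
proof -
  define D where "D = cos (x - a) - cos (x + a)"
  define s where "s = - cos (x + a) / D"
  define t where "t = cos (x - a) / D"
  have D: "0 < D" using assms(4) by (simp add: D_def)
  have "s + t = (- cos (x + a) + cos (x - a)) / D"
    unfolding s_def t_def by (rule add_divide_distrib[symmetric])
  also have "\<dots> = 1" using D by (simp add: D_def)
  finally have st: "0 \<le> s" "0 \<le> t" "s + t = 1"
    using assms(2,3) D unfolding s_def t_def by (auto intro: divide_nonneg_pos divide_nonpos_pos)
  have "cos (x - a) * cis (2 * a) - cos (x + a) = D * (s + t * cis (2 * a))"
    using D by (simp add: s_def t_def algebra_simps)
  with cos_mult_cis_chord[of a x] assms(1)
  have "cis (2 * a - x) - cis (- x) = complex_of_real (D / cos a) * (s + t * cis (2 * a))"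
    by (simp add: field_simps)
  with st that show ?thesis unfolding D_def by blast
qed

text \<open>The hypotheses on m say that the ray from c parallel to the side p_i - p_(i-1) crosses the
  edge [p_k, p_(k+1)], k = i - 1 + m, at the point y0 = s p_k + t p_(k+1); cis (beta + a) is the
  outer normal of that edge.\<close>

lemma gauge_norm_reg_polygon_side:
  fixes m :: nat
  assumes n: "3 \<le> n" and r: "0 < r" and i: "1 \<le> i"
    and cos_signs: "0 \<le> cos (pi / real n * (2 * real m - 1))" "cos (pi / real n * (2 * real m + 1)) \<le> 0"
    and cos_less: "cos (pi / real n * (2 * real m + 1)) < cos (pi / real n * (2 * real m - 1))"
  shows "gauge_norm (reg_polygon n c r \<theta>) c (reg_vertex n c r \<theta> i - reg_vertex n c r \<theta> (i - 1))
      = (cos (pi / real n * (2 * real m - 1)) - cos (pi / real n * (2 * real m + 1))) / cos (pi / real n)"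
proof -
  define a where "a = pi / real n"
  define x where "x = 2 * real m * a"
  define k where "k = i - 1 + m"
  define \<beta> where "\<beta> = \<theta> + 2 * pi * real k / real n"
  define \<mu> where "\<mu> = (cos (x - a) - cos (x + a)) / cos a"
  have xa: "x - a = pi / real n * (2 * real m - 1)" "x + a = pi / real n * (2 * real m + 1)"
    by (simp_all add: x_def a_def algebra_simps)
  have cos_a: "0 < cos a"
    unfolding a_def using n by (intro cos_gt_zero) (auto simp: field_simps)
  have \<mu>: "0 < \<mu>" unfolding \<mu>_def using cos_a cos_less xa by simp
  obtain s t where st: "0 \<le> s" "0 \<le> t" "s + t = 1"
    and chord: "cis (2 * a - x) - cis (- x)
      = complex_of_real \<mu> * (complex_of_real s + complex_of_real t * cis (2 * a))"
    using cis_chord_eq_scaled_convex_combination[of a x] cos_a cos_signs cos_less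
    unfolding \<mu>_def xa[symmetric] by blast
  define y0 where
    "y0 = c + complex_of_real r * cis \<beta> * (complex_of_real s + complex_of_real t * cis (2 * a))"
  have y0_in: "y0 \<in> reg_polygon n c r \<theta>"
    unfolding y0_def \<beta>_def a_def using n st reg_polygon_edge_point[of n s t c r \<theta> k] by simp
  have normal: "\<theta> + (2 * real k + 1) * pi / real n = \<beta> + a"
    using n by (simp add: \<beta>_def a_def field_simps)
  have halfplane:
    "reg_polygon n c r \<theta> \<subseteq> {y. Re ((y - c) * cnj (cis (\<beta> + a))) \<le> r * cos a}"
    using reg_polygon_subset_halfplane[where k = k and \<theta> = \<theta> and c = c, of n r] n r
    unfolding normal a_def by simp
  have "(y0 - c) * cnj (cis (\<beta> + a))
      = r * (cis \<beta> * (complex_of_real s + complex_of_real t * cis (2 * a)) * cnj (cis (\<beta> + a)))"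
    by (simp add: y0_def mult.assoc)
  moreover have "Re (complex_of_real r * z) = r * Re z" for z by simp
  ultimately have on_line: "Re ((y0 - c) * cnj (cis (\<beta> + a))) = r * cos a"
    by (simp only: Re_edge_combination_mult_cnj_normal st(3) mult_1)
  have "reg_vertex n c r \<theta> i - reg_vertex n c r \<theta> (i - 1)
      = r * cis \<beta> * (cis (2 * a - x) - cis (- x))"
    using reg_vertex_side_eq_rotated_chord[of n i c r \<theta> m] n i
    unfolding \<beta>_def k_def a_def x_def by simp
  then have side:
    "reg_vertex n c r \<theta> i - reg_vertex n c r \<theta> (i - 1) = complex_of_real \<mu> * (y0 - c)"
    unfolding chord y0_def by (simp add: mult_ac)
  have "gauge_norm (reg_polygon n c r \<theta>) c
      (reg_vertex n c r \<theta> i - reg_vertex n c r \<theta> (i - 1)) = \<mu>"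
    unfolding side using r cos_a \<mu>
    by (intro gauge_norm_eq_of_supporting_line[OF halfplane y0_in on_line]) auto
  then show ?thesis unfolding \<mu>_def xa unfolding a_def .
qed

lemma half_perimeter_eq_cos_diff:
  assumes "3 \<le> n" "0 < r"
  defines "m \<equiv> (n + 1) div 4"
  shows "half_perimeter n c r \<theta> = real n / (2 * cos (pi / real n)) *
      (cos (pi / real n * (2 * real m - 1)) - cos (pi / real n * (2 * real m + 1)))"
proof -
  have "gauge_norm (reg_polygon n c r \<theta>) c (reg_vertex n c r \<theta> i - reg_vertex n c r \<theta> (i - 1))
      = (cos (pi / real n * (2 * real m - 1)) - cos (pi / real n * (2 * real m + 1))) / cos (pi / real n)"
    if "i \<in> {1..n}" for i
    using that assms quarter_index_cos_bounds[OF assms(1)] by (intro gauge_norm_reg_polygon_side) auto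
  then show ?thesis unfolding half_perimeter_def by simp
qed

lemma half_perimeter_eq_tan_sin:
  assumes "3 \<le> n" "0 < r"
  shows "half_perimeter n c r \<theta>
    = real n * tan (pi / real n) * sin (pi / real n * (2 * real ((n + 1) div 4)))"
proof -
  have "cos (y - a) - cos (y + a) = 2 * sin y * sin a" for y a :: real
    by (simp add: cos_diff cos_add)
  from this[of "pi / real n * (2 * real ((n + 1) div 4))" "pi / real n"]
  show ?thesis unfolding half_perimeter_eq_cos_diff[OF assms]
    by (simp add: tan_def algebra_simps)
qed

lemma half_perimeter_mod4_0:
  assumes "3 \<le> n" "0 < r" "n mod 4 = 0"
  shows "half_perimeter n c r \<theta> = real n * tan (pi / real n)"
proof -
  have "n = 4 * ((n + 1) div 4)" using assms(3) by presburger
  then have "real n = 4 * real ((n + 1) div 4)" by (metis of_nat_mult of_nat_numeral)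
  then have angle: "pi / real n * (2 * real ((n + 1) div 4)) = pi / 2"
    using assms(1) by (simp add: field_simps)
  show ?thesis unfolding half_perimeter_eq_tan_sin[OF assms(1,2)] angle by simp
qed

lemma half_perimeter_mod4_2:
  assumes "3 \<le> n" "0 < r" "n mod 4 = 2"
  shows "half_perimeter n c r \<theta> = real n * sin (pi / real n)"
proof -
  have "n = 4 * ((n + 1) div 4) + 2" using assms(3) by presburger
  then have "real n = 4 * real ((n + 1) div 4) + 2" by (metis of_nat_add of_nat_mult of_nat_numeral)
  then have "pi / real n * (2 * real ((n + 1) div 4)) = pi / 2 - pi / real n"
    using assms(1) by (simp add: field_simps)
  moreover have "cos (pi / real n) \<noteq> 0"
    using assms(1) by (intro cos_gt_zero[THEN less_imp_neq, symmetric]) (auto simp: field_simps)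
  ultimately show ?thesis unfolding half_perimeter_eq_tan_sin[OF assms(1,2)] by (simp add: tan_def sin_diff)
qed

lemma half_perimeter_odd:
  assumes "3 \<le> n" "0 < r" "odd n"
  shows "half_perimeter n c r \<theta> = real n * tan (pi / real n) * cos (pi / (2 * real n))"
proof -
  have "sin (pi / real n * (2 * real ((n + 1) div 4))) = cos (pi / (2 * real n))"
  proof (cases "n mod 4 = 1")
    case True
    then have "n = 4 * ((n + 1) div 4) + 1" by presburger
    then have "real n = 4 * real ((n + 1) div 4) + 1"
      by (metis of_nat_add of_nat_mult of_nat_numeral of_nat_1)
    then have "pi / real n * (2 * real ((n + 1) div 4)) = pi / 2 - pi / (2 * real n)"
      using assms(1) by (simp add: field_simps)
    then show ?thesis by (simp add: sin_diff)
  next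
    case False
    with assms(3) have "n + 1 = 4 * ((n + 1) div 4)" by presburger
    then have "real n + 1 = 4 * real ((n + 1) div 4)"
      by (metis of_nat_add of_nat_1 of_nat_mult of_nat_numeral)
    then have "2 * real ((n + 1) div 4) = (real n + 1) / 2" by simp
    then have "pi / real n * (2 * real ((n + 1) div 4)) = pi / 2 + pi / (2 * real n)"
      using assms(1) by (simp add: field_simps)
    then show ?thesis by (simp add: sin_add)
  qed
  then show ?thesis unfolding half_perimeter_eq_tan_sin[OF assms(1,2)] by simp
qed

lemma cos_pi_div_five: "cos (pi / 5) = (1 + sqrt 5) / 4"
proof -
  define c where "c = cos (pi / 5)"
  have "cos (3 * (pi / 5)) = - cos (2 * (pi / 5))"
    using cos_pi_minus[of "2 * (pi / 5)"] by simp
  then have "4 * c ^ 3 - 3 * c = 1 - 2 * c ^ 2"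
    unfolding c_def cos_treble_cos cos_double_cos by simp
  then have "(c + 1) * (4 * c ^ 2 - 2 * c - 1) = 0"
    by (simp add: algebra_simps power3_eq_cube power2_eq_square)
  moreover have "1 / 2 < c"
    using cos_monotone_0_pi[of "pi / 5" "pi / 3"] by (simp add: c_def cos_60)
  ultimately have "4 * c ^ 2 - 2 * c - 1 = 0" by simp
  then have "sqrt 5 = 4 * c - 1"
    using \<open>1 / 2 < c\<close> by (intro real_sqrt_unique) (auto simp: power2_eq_square algebra_simps)
  then show ?thesis unfolding c_def by simp
qed

lemma tan_pi_div_eight: "tan (pi / 8) = sqrt 2 - 1"
proof -
  have "tan (pi / 8) = sin (pi / 4) / (cos (pi / 4) + 1)"
    using tan_half[of "pi / 8"] by simp
  also have "\<dots> = sqrt 2 / (sqrt 2 + 2)"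
    by (simp add: sin_45 cos_45 field_simps)
  also have "\<dots> = sqrt 2 - 1"
  proof -
    have "(sqrt 2 - 1) * (sqrt 2 + 2) = sqrt 2" by (simp add: algebra_simps)
    moreover have "sqrt 2 + 2 \<noteq> 0" by (simp add: add_nonneg_eq_0_iff)
    ultimately show ?thesis by (simp add: divide_eq_eq)
  qed
  finally show ?thesis .
qed

lemma floor_of_nat_plus_one_div_4: "\<lfloor>(real n + 1) / 4\<rfloor> = int ((n + 1) div 4)"
  using floor_divide_of_nat_eq[of "n + 1" 4, where 'a = real] by (simp add: add.commute)

lemma half_perimeter_3: "0 < r \<Longrightarrow> half_perimeter 3 c r \<theta> = 9 / 2"
  using half_perimeter_odd[of 3 r] by (simp add: tan_60 cos_30)

lemma half_perimeter_4: "0 < r \<Longrightarrow> half_perimeter 4 c r \<theta> = 4"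
  using half_perimeter_mod4_0[of 4 r] by (simp add: tan_45)

lemma half_perimeter_5:
  assumes "0 < r"
  shows "half_perimeter 5 c r \<theta> = 5 * (5 - sqrt 5) / 4"
proof -
  have "cos (pi / 5) \<noteq> 0" by (simp add: cos_pi_div_five add_nonneg_eq_0_iff)
  have "half_perimeter 5 c r \<theta> = 5 * tan (pi / 5) * sin (2 * (pi / 5))"
    using half_perimeter_eq_tan_sin[of 5 r c \<theta>] assms by (simp add: mult.commute)
  also have "\<dots> = 10 * sin (pi / 5) ^ 2"
    unfolding sin_double tan_def using \<open>cos (pi / 5) \<noteq> 0\<close> by (simp add: power2_eq_square)
  also have "\<dots> = 10 * (1 - cos (pi / 5) ^ 2)"
    by (simp add: sin_squared_eq)
  also have "\<dots> = 5 * (5 - sqrt 5) / 4"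
    by (simp add: cos_pi_div_five power2_eq_square algebra_simps)
  finally show ?thesis .
qed

lemma half_perimeter_6: "0 < r \<Longrightarrow> half_perimeter 6 c r \<theta> = 3"
  using half_perimeter_mod4_2[of 6 r] by (simp add: sin_30)

lemma half_perimeter_8: "0 < r \<Longrightarrow> half_perimeter 8 c r \<theta> = 8 * sqrt 2 - 8"
  using half_perimeter_mod4_0[of 8 r] by (simp add: tan_pi_div_eight)

theorem mainTheorem4:
  shows "(\<forall>(n::nat) c r \<theta>. 3 \<le> n \<and> r > 0 \<longrightarrow>
      half_perimeter n c r \<theta> =
        real n / (2 * cos (pi / real n)) *
          (cos (pi / real n * (2 * real_of_int \<lfloor>(real n + 1) / 4\<rfloor> - 1))
         - cos (pi / real n * (2 * real_of_int \<lfloor>(real n + 1) / 4\<rfloor> + 1)))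
      \<and> (n mod 4 = 0 \<longrightarrow> half_perimeter n c r \<theta> = real n * tan (pi / real n))
      \<and> (odd n \<longrightarrow> half_perimeter n c r \<theta> = real n * tan (pi / real n) * cos (pi / (2 * real n)))
      \<and> (n mod 4 = 2 \<longrightarrow> half_perimeter n c r \<theta> = real n * sin (pi / real n)))
   \<and> (\<forall>c r \<theta>. r > 0 \<longrightarrow>
      half_perimeter 3 c r \<theta> = 9 / 2
      \<and> half_perimeter 4 c r \<theta> = 4
      \<and> half_perimeter 5 c r \<theta> = 5 * (5 - sqrt 5) / 4
      \<and> half_perimeter 6 c r \<theta> = 3
      \<and> half_perimeter 8 c r \<theta> = 8 * sqrt 2 - 8)"
proof (intro conjI allI impI)
  fix n :: nat and c :: complex and r \<theta> :: real
  assume "3 \<le> n \<and> 0 < r"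
  then have n: "3 \<le> n" and r: "0 < r" by auto
  show "half_perimeter n c r \<theta> =
        real n / (2 * cos (pi / real n)) *
          (cos (pi / real n * (2 * real_of_int \<lfloor>(real n + 1) / 4\<rfloor> - 1))
         - cos (pi / real n * (2 * real_of_int \<lfloor>(real n + 1) / 4\<rfloor> + 1)))"
    unfolding floor_of_nat_plus_one_div_4 of_int_of_nat_eq by (rule half_perimeter_eq_cos_diff[OF n r])
  show "n mod 4 = 0 \<Longrightarrow> half_perimeter n c r \<theta> = real n * tan (pi / real n)"
    by (rule half_perimeter_mod4_0[OF n r])
  show "odd n \<Longrightarrow> half_perimeter n c r \<theta> = real n * tan (pi / real n) * cos (pi / (2 * real n))"
    by (rule half_perimeter_odd[OF n r])
  show "n mod 4 = 2 \<Longrightarrow> half_perimeter n c r \<theta> = real n * sin (pi / real n)"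
    by (rule half_perimeter_mod4_2[OF n r])
qed (simp_all add: half_perimeter_3 half_perimeter_4 half_perimeter_5 half_perimeter_6 half_perimeter_8)

end
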